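(* Let $(G,u)$ be a unital po-group such that $G$ satisfies RIP. If the pseudo effect algebra $E=\Gamma(G,u)$ satisfies RDP$_1$, then $G$ satisfies RDP$_1$.
   Context: A po-group is a (not necessarily Abelian, additively written) group with a partial order $\le$ such that $a\le b$ implies $x+a+y\le x+b+y$; $G^+$ is its positive cone. A unital po-group $(G,u)$ is a po-group with a strong unit $u\in G^+$ (for each $g\in G$ there is $k\ge1$ with $g\le ku$). $\Gamma(G,u)=\{g\in G:0\le g\le u\}$ is a pseudo effect algebra with constants $0,u$ and partial addition: $a+b$ is defined (equal to the group sum) iff $a+b\le u$. RIP: whenever $a_i\le b_j$ for all $i,j\in\{1,2\}$, there is $c$ with $a_i\le c\le b_j$ for all $i,j$. RDP$_1$ for a po-group $G$: for all $a_1,a_2,b_1,b_2\in G^+$ with $a_1+a_2=b_1+b_2$ there are $c_{11},c_{12},c_{21},c_{22}\in G^+$ with $a_1=c_{11}+c_{12}$, $a_2=c_{21}+c_{22}$, $b_1=c_{11}+c_{21}$, $b_2=c_{12}+c_{22}$, and such that $0\le x\le c_{12}$, $0\le y\le c_{21}$ imply $x+y=y+x$. RDP$_1$ for a pseudo effect algebra $E$ is defined identically with $G^+$ replaced by $E$ and all sums required to be defined in $E$. *)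

theory Defs
  imports Main
begin

definition po_group :: "('a::{group_add,order}) itself \<Rightarrow> bool" where
  "po_group _ \<longleftrightarrow> (\<forall>a b x y :: 'a. a \<le> b \<longrightarrow> x + a + y \<le> x + b + y)"

definition kmul :: "nat \<Rightarrow> 'a::monoid_add \<Rightarrow> 'a" where
  "kmul k u = ((\<lambda>x. u + x) ^^ k) 0"

definition strong_unit :: "'a::{group_add,order} \<Rightarrow> bool" where
  "strong_unit u \<longleftrightarrow> 0 \<le> u \<and> (\<forall>g. \<exists>k\<ge>1. g \<le> kmul k u)"

definition RIP :: "('a::order) itself \<Rightarrow> bool" where
  "RIP _ \<longleftrightarrow> (\<forall>a1 a2 b1 b2 :: 'a.
     a1 \<le> b1 \<and> a1 \<le> b2 \<and> a2 \<le> b1 \<and> a2 \<le> b2 \<longrightarrow>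
     (\<exists>c. a1 \<le> c \<and> a2 \<le> c \<and> c \<le> b1 \<and> c \<le> b2))"

definition RDP1_group :: "('a::{group_add,order}) itself \<Rightarrow> bool" where
  "RDP1_group _ \<longleftrightarrow> (\<forall>a1 a2 b1 b2 :: 'a.
     0 \<le> a1 \<and> 0 \<le> a2 \<and> 0 \<le> b1 \<and> 0 \<le> b2 \<and> a1 + a2 = b1 + b2 \<longrightarrow>
     (\<exists>c11 c12 c21 c22.
        0 \<le> c11 \<and> 0 \<le> c12 \<and> 0 \<le> c21 \<and> 0 \<le> c22 \<and>
        a1 = c11 + c12 \<and> a2 = c21 + c22 \<and> b1 = c11 + c21 \<and> b2 = c12 + c22 \<and>
        (\<forall>x y. 0 \<le> x \<and> x \<le> c12 \<and> 0 \<le> y \<and> y \<le> c21 \<longrightarrow> x + y = y + x)))"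

text \<open>The interval Gamma(G,u) = [0,u]; the partial sum a+b is defined iff a+b \<le> u.\<close>
definition Gamma :: "'a::{group_add,order} \<Rightarrow> 'a set" where
  "Gamma u = {g. 0 \<le> g \<and> g \<le> u}"

text \<open>RDP_1 for the pseudo effect algebra Gamma(G,u): all elements in Gamma(G,u)
and all sums mentioned required to be defined (i.e. \<le> u).\<close>
definition RDP1_Gamma :: "'a::{group_add,order} \<Rightarrow> bool" where
  "RDP1_Gamma u \<longleftrightarrow> (\<forall>a1 a2 b1 b2.
     a1 \<in> Gamma u \<and> a2 \<in> Gamma u \<and> b1 \<in> Gamma u \<and> b2 \<in> Gamma u \<and>
     a1 + a2 \<le> u \<and> b1 + b2 \<le> u \<and> a1 + a2 = b1 + b2 \<longrightarrow>
     (\<exists>c11 c12 c21 c22.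
        c11 \<in> Gamma u \<and> c12 \<in> Gamma u \<and> c21 \<in> Gamma u \<and> c22 \<in> Gamma u \<and>
        c11 + c12 \<le> u \<and> c21 + c22 \<le> u \<and> c11 + c21 \<le> u \<and> c12 + c22 \<le> u \<and>
        a1 = c11 + c12 \<and> a2 = c21 + c22 \<and> b1 = c11 + c21 \<and> b2 = c12 + c22 \<and>
        (\<forall>x y. x \<in> Gamma u \<and> y \<in> Gamma u \<and> x \<le> c12 \<and> y \<le> c21 \<longrightarrow>
           x + y \<le> u \<and> y + x \<le> u \<and> x + y = y + x)))"

end

theory Submission
  imports Defs
begin

text \<open>RIP yields the Riesz splitting x \<le> a + b \<Longrightarrow> x = x1 + x2 with x1 \<le> a, x2 \<le> b.
If a1, b1 \<le> u, RIP gives s \<in> [0,u] above a1 and b1 and below a1 + a2; the equation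
a1 + (-a1 + s) = b1 + (-b1 + s) = s lives in Gamma(G,u), and its refinement extends to the
original quadruple by adding the common remainder -s + a1 + a2. Refinements can be glued:
a refinement of (x, a + a2, b1, b2) and one of (a, a2, d21, d22), where (d21, d22) is the
second row of the first, give one of (x + a, a2, b1, b2); the commutation condition survives
because, by Riesz splitting, the elements commuting with [0,d] are closed under sums.
Writing an element below k u as a sum of k elements below u, induction on k (applied once
to each side, using the symmetry between the a's and the b's) removes the bounds.\<close>

definition commute_below :: "'a::{group_add,order} \<Rightarrow> 'a \<Rightarrow> bool" where
  "commute_below c d \<longleftrightarrow> (\<forall>x y. 0 \<le> x \<and> x \<le> c \<and> 0 \<le> y \<and> y \<le> d \<longrightarrow> x + y = y + x)"

definition rdp1_decomposable :: "'a::{group_add,order} \<Rightarrow> 'a \<Rightarrow> 'a \<Rightarrow> 'a \<Rightarrow> bool" where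
  "rdp1_decomposable a1 a2 b1 b2 \<longleftrightarrow> (\<exists>c11 c12 c21 c22.
     0 \<le> c11 \<and> 0 \<le> c12 \<and> 0 \<le> c21 \<and> 0 \<le> c22 \<and>
     a1 = c11 + c12 \<and> a2 = c21 + c22 \<and> b1 = c11 + c21 \<and> b2 = c12 + c22 \<and>
     commute_below c12 c21)"

lemma RDP1_group_iff_decomposable:
  "RDP1_group TYPE('a::{group_add,order}) \<longleftrightarrow>
     (\<forall>a1 a2 b1 b2 :: 'a. 0 \<le> a1 \<and> 0 \<le> a2 \<and> 0 \<le> b1 \<and> 0 \<le> b2 \<and> a1 + a2 = b1 + b2
        \<longrightarrow> rdp1_decomposable a1 a2 b1 b2)"
  unfolding RDP1_group_def rdp1_decomposable_def commute_below_def by blast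

lemma commute_below_sym: "commute_below c d \<Longrightarrow> commute_below d c"
  unfolding commute_below_def by metis

lemma commute_below_mono: "commute_below c d \<Longrightarrow> c' \<le> c \<Longrightarrow> d' \<le> d \<Longrightarrow> commute_below c' d'"
  unfolding commute_below_def by (meson order_trans)

lemma rdp1_decomposable_swap:
  "rdp1_decomposable a1 a2 b1 b2 \<Longrightarrow> rdp1_decomposable b1 b2 a1 a2"
  unfolding rdp1_decomposable_def by (metis commute_below_sym)

context
  fixes T :: "'a::{group_add,order} itself"
  assumes po: "po_group T"
begin

lemma po_add_left_mono: "(a::'a) \<le> b \<Longrightarrow> x + a \<le> x + b"
  using po unfolding po_group_def by (metis add_0_right)

lemma po_add_right_mono: "(a::'a) \<le> b \<Longrightarrow> a + y \<le> b + y"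
  using po unfolding po_group_def by (metis add_0_left)

lemma po_le_add_iff_minus_left: "(y::'a) \<le> c + x \<longleftrightarrow> -c + y \<le> x"
  using po_add_left_mono[of "-c + y" x c] po_add_left_mono[of y "c + x" "-c"]
  by (auto simp: add.assoc[symmetric])

lemma po_le_add_iff_minus_right: "(y::'a) \<le> c + x \<longleftrightarrow> y + -x \<le> c"
  using po_add_right_mono[of "y + -x" c x] po_add_right_mono[of y "c + x" "-x"]
  by (auto simp: add.assoc)

lemma po_le_add_nonneg_right: "0 \<le> (b::'a) \<Longrightarrow> a \<le> a + b"
  using po_add_left_mono[of 0 b a] by simp

lemma po_le_add_nonneg_left: "0 \<le> (a::'a) \<Longrightarrow> b \<le> a + b"
  using po_add_right_mono[of 0 a b] by simp

lemma po_add_nonneg_nonneg: "0 \<le> (a::'a) \<Longrightarrow> 0 \<le> b \<Longrightarrow> 0 \<le> a + b"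
  using po_le_add_nonneg_right[of b a] by (metis order_trans)

lemma po_nonneg_minus_add: "(c::'a) \<le> x \<Longrightarrow> 0 \<le> -c + x"
  using po_add_left_mono[of c x "-c"] by simp

lemma po_add_minus_le: "0 \<le> (c::'a) \<Longrightarrow> x + -c \<le> x"
  using po_add_left_mono[of "-c" 0 x] po_add_left_mono[of 0 c "-c"] by simp

lemma kmul_Suc: "kmul (Suc k) u = u + kmul k u"
  by (simp add: kmul_def)

lemma kmul_nonneg: "0 \<le> (u::'a) \<Longrightarrow> 0 \<le> kmul k u"
  by (induction k) (simp_all add: kmul_def po_add_nonneg_nonneg)

lemma rdp1_decomposable_add_right:
  assumes "rdp1_decomposable a1 a2 b1 b2" "0 \<le> (r::'a)"
  shows "rdp1_decomposable a1 (a2 + r) b1 (b2 + r)"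
proof -
  obtain c11 c12 c21 c22 where c: "0 \<le> c11" "0 \<le> c12" "0 \<le> c21" "0 \<le> c22"
    "a1 = c11 + c12" "a2 = c21 + c22" "b1 = c11 + c21" "b2 = c12 + c22" "commute_below c12 c21"
    using assms(1) unfolding rdp1_decomposable_def by blast
  have "a2 + r = c21 + (c22 + r)" "b2 + r = c12 + (c22 + r)"
    using c(6,8) by (simp_all add: add.assoc)
  then show ?thesis
    unfolding rdp1_decomposable_def
    using c(1-3,5,7,9) po_add_nonneg_nonneg[OF c(4) assms(2)] by blast
qed

lemma rdp1_decomposable_sum_le_unit:
  assumes Gamma_RDP1: "RDP1_Gamma (u::'a)"
    and "0 \<le> a1" "0 \<le> a2" "0 \<le> b1" "0 \<le> b2" "a1 + a2 = b1 + b2" "a1 + a2 \<le> u"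
  shows "rdp1_decomposable a1 a2 b1 b2"
proof -
  have in_Gamma: "x \<in> Gamma u" if "0 \<le> x" "x \<le> s" "s \<le> u" for x s
    using that unfolding Gamma_def by (auto dest: order_trans)
  have "a1 \<le> a1 + a2" "a2 \<le> a1 + a2"
    using po_le_add_nonneg_right[OF assms(3)] po_le_add_nonneg_left[OF assms(2)] .
  moreover have "b1 \<le> a1 + a2" "b2 \<le> a1 + a2"
    unfolding assms(6)
    using po_le_add_nonneg_right[OF assms(5)] po_le_add_nonneg_left[OF assms(4)] .
  ultimately have in_domain: "a1 \<in> Gamma u \<and> a2 \<in> Gamma u \<and> b1 \<in> Gamma u \<and> b2 \<in> Gamma u \<and>
      a1 + a2 \<le> u \<and> b1 + b2 \<le> u \<and> a1 + a2 = b1 + b2"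
    using in_Gamma[OF _ _ assms(7)] assms by simp
  then obtain c11 c12 c21 c22 where c:
    "c11 \<in> Gamma u" "c12 \<in> Gamma u" "c21 \<in> Gamma u" "c22 \<in> Gamma u"
    "a1 = c11 + c12" "a2 = c21 + c22" "b1 = c11 + c21" "b2 = c12 + c22"
    "\<forall>x y. x \<in> Gamma u \<and> y \<in> Gamma u \<and> x \<le> c12 \<and> y \<le> c21 \<longrightarrow> x + y = y + x"
    using Gamma_RDP1[unfolded RDP1_Gamma_def, rule_format, OF in_domain] by metis
  have "commute_below c12 c21"
    unfolding commute_below_def
    using c(2,3,9) unfolding Gamma_def by (auto dest: order_trans)
  moreover have "0 \<le> c11" "0 \<le> c12" "0 \<le> c21" "0 \<le> c22"
    using c(1-4) by (simp_all add: Gamma_def)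
  ultimately show ?thesis
    unfolding rdp1_decomposable_def using c(5-8) by blast
qed

context
  assumes rip: "RIP T"
begin

lemma Riesz_split:
  assumes "0 \<le> (a::'a)" "0 \<le> b" "0 \<le> x" "x \<le> a + b"
  shows "\<exists>x1 x2. x = x1 + x2 \<and> 0 \<le> x1 \<and> x1 \<le> a \<and> 0 \<le> x2 \<and> x2 \<le> b"
proof -
  have "x + -b \<le> a" "x + -b \<le> x"
    using assms po_le_add_iff_minus_right po_add_minus_le by blast+
  then obtain c where c: "0 \<le> c" "x + -b \<le> c" "c \<le> a" "c \<le> x"
    using rip assms(1,3) unfolding RIP_def by blast
  have "-c + x \<le> b"
    using c(2) po_le_add_iff_minus_right po_le_add_iff_minus_left by blast
  moreover have "x = c + (-c + x)"
    by (simp add: add.assoc[symmetric])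
  ultimately show ?thesis
    using c po_nonneg_minus_add[OF c(4)] by blast
qed

lemma commute_below_add_left:
  assumes "commute_below (c1::'a) d" "commute_below c2 d" "0 \<le> c1" "0 \<le> c2"
  shows "commute_below (c1 + c2) d"
  unfolding commute_below_def
proof (intro allI impI)
  fix x y :: 'a
  assume xy: "0 \<le> x \<and> x \<le> c1 + c2 \<and> 0 \<le> y \<and> y \<le> d"
  then obtain x1 x2 where x: "x = x1 + x2" "0 \<le> x1" "x1 \<le> c1" "0 \<le> x2" "x2 \<le> c2"
    using Riesz_split[OF assms(3,4)] by blast
  have "x1 + y = y + x1" "x2 + y = y + x2"
    using assms(1,2) xy x unfolding commute_below_def by blast+
  then show "x + y = y + x"
    by (metis x(1) add.assoc)
qed

lemma rdp1_decomposable_add_left: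
  assumes first: "rdp1_decomposable x (a + a2) b1 b2"
    and second: "\<And>d21 d22. 0 \<le> d21 \<Longrightarrow> 0 \<le> d22 \<Longrightarrow> d21 \<le> b1 \<Longrightarrow> a + a2 = d21 + d22 \<Longrightarrow>
                   rdp1_decomposable a a2 d21 d22"
  shows "rdp1_decomposable (x + a) a2 (b1::'a) b2"
proof -
  obtain d11 d12 d21 d22 where d: "0 \<le> d11" "0 \<le> d12" "0 \<le> d21" "0 \<le> d22"
    "x = d11 + d12" "a + a2 = d21 + d22" "b1 = d11 + d21" "b2 = d12 + d22" "commute_below d12 d21"
    using first unfolding rdp1_decomposable_def by blast
  have "d21 \<le> b1"
    using d(1,7) po_le_add_nonneg_left by blast
  then obtain e11 e12 e21 e22 where e: "0 \<le> e11" "0 \<le> e12" "0 \<le> e21" "0 \<le> e22"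
    "a = e11 + e12" "a2 = e21 + e22" "d21 = e11 + e21" "d22 = e12 + e22" "commute_below e12 e21"
    using second[OF d(3,4) _ d(6)] unfolding rdp1_decomposable_def by blast
  have "e11 \<le> d21"
    using po_le_add_nonneg_right[OF e(3), of e11] e(7) by simp
  have "e21 \<le> d21"
    using po_le_add_nonneg_left[OF e(1), of e21] e(7) by simp
  have swap: "d12 + e11 = e11 + d12"
    using d(2,9) e(1) \<open>e11 \<le> d21\<close> unfolding commute_below_def by blast
  have "x + a = d11 + ((d12 + e11) + e12)"
    by (simp add: d(5) e(5) add.assoc)
  also have "\<dots> = (d11 + e11) + (d12 + e12)"
    by (simp add: swap add.assoc)
  finally have a1: "x + a = (d11 + e11) + (d12 + e12)" .
  have b1: "b1 = (d11 + e11) + e21" and b2: "b2 = (d12 + e12) + e22"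
    by (simp_all add: d(7,8) e(7,8) add.assoc)
  have "commute_below (d12 + e12) e21"
    using commute_below_add_left[OF commute_below_mono[OF d(9) order_refl \<open>e21 \<le> d21\<close>] e(9) d(2) e(2)] .
  moreover have "0 \<le> d11 + e11" "0 \<le> d12 + e12"
    using d(1,2) e(1,2) po_add_nonneg_nonneg by blast+
  ultimately show ?thesis
    unfolding rdp1_decomposable_def using a1 b1 b2 e(3,4,6) by blast
qed

lemma rdp1_decomposable_le_kmul:
  assumes u: "0 \<le> u"
    and Q_down: "\<And>b b'. Q b \<Longrightarrow> 0 \<le> b' \<Longrightarrow> b' \<le> b \<Longrightarrow> Q b'"
    and base: "\<And>a1 a2 b1 b2. 0 \<le> a1 \<Longrightarrow> a1 \<le> u \<Longrightarrow> 0 \<le> a2 \<Longrightarrow> 0 \<le> b1 \<Longrightarrow> 0 \<le> b2 \<Longrightarrow>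
                 Q b1 \<Longrightarrow> a1 + a2 = b1 + b2 \<Longrightarrow> rdp1_decomposable a1 a2 b1 b2"
  shows "0 \<le> a1 \<Longrightarrow> a1 \<le> kmul n u \<Longrightarrow> 0 \<le> a2 \<Longrightarrow> 0 \<le> b1 \<Longrightarrow> 0 \<le> b2 \<Longrightarrow>
           Q b1 \<Longrightarrow> a1 + a2 = b1 + (b2::'a) \<Longrightarrow> rdp1_decomposable a1 a2 b1 b2"
proof (induction n arbitrary: a1 a2 b1 b2)
  case 0
  then have "a1 \<le> u"
    using u by (simp add: kmul_def)
  with 0 show ?case
    using base by blast
next
  case (Suc n)
  obtain x a where xa: "a1 = x + a" "0 \<le> x" "x \<le> u" "0 \<le> a" "a \<le> kmul n u"
    using Riesz_split[OF u kmul_nonneg[OF u], of a1 n] Suc.prems(1,2) by (auto simp: kmul_Suc)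
  have "rdp1_decomposable x (a + a2) b1 b2"
    using base[OF xa(2,3) po_add_nonneg_nonneg[OF xa(4) Suc.prems(3)] Suc.prems(4-6)]
      Suc.prems(7) xa(1) by (simp add: add.assoc)
  moreover have "rdp1_decomposable a a2 d21 d22"
    if "0 \<le> d21" "0 \<le> d22" "d21 \<le> b1" "a + a2 = d21 + d22" for d21 d22
    using Suc.IH[OF xa(4,5) Suc.prems(3) that(1,2) Q_down[OF Suc.prems(6) that(1,3)] that(4)] .
  ultimately show ?case
    using rdp1_decomposable_add_left xa(1) by blast
qed

context
  fixes u :: 'a
  assumes Gamma_RDP1: "RDP1_Gamma u"
begin

lemma rdp1_decomposable_le_unit:
  assumes "0 \<le> a1" "a1 \<le> u" "0 \<le> a2" "0 \<le> b1" "b1 \<le> u" "0 \<le> b2" "a1 + a2 = b1 + b2"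
  shows "rdp1_decomposable a1 a2 b1 b2"
proof -
  have "a1 \<le> a1 + a2" "b1 \<le> a1 + a2"
    using assms po_le_add_nonneg_right by metis+
  then obtain s where s: "a1 \<le> s" "b1 \<le> s" "s \<le> u" "s \<le> a1 + a2"
    using rip assms(2,5) unfolding RIP_def by blast
  define r where "r = -s + (a1 + a2)"
  have "rdp1_decomposable a1 (-a1 + s) b1 (-b1 + s)"
    using rdp1_decomposable_sum_le_unit[OF Gamma_RDP1] assms(1,4) s po_nonneg_minus_add
    by (simp add: add.assoc[symmetric])
  then have "rdp1_decomposable a1 (-a1 + s + r) b1 (-b1 + s + r)"
    using rdp1_decomposable_add_right po_nonneg_minus_add[OF s(4)] unfolding r_def by blast
  moreover have "-a1 + s + r = a2"
    unfolding r_def by (simp add: add.assoc[symmetric])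
  moreover have "-b1 + s + r = b2"
    unfolding r_def assms(7) by (simp add: add.assoc[symmetric])
  ultimately show ?thesis
    by simp
qed

lemma rdp1_decomposable_left_le_unit:
  assumes "0 \<le> a1" "a1 \<le> u" "0 \<le> a2" "0 \<le> b1" "b1 \<le> kmul m u" "0 \<le> b2" "a1 + a2 = b1 + b2"
  shows "rdp1_decomposable a1 a2 b1 b2"
proof (rule rdp1_decomposable_swap)
  have u: "0 \<le> u"
    using assms(1,2) by (rule order_trans)
  have base: "rdp1_decomposable x a2' y b2'"
    if "0 \<le> x" "x \<le> u" "0 \<le> a2'" "0 \<le> y" "0 \<le> b2'" "y \<le> u" "x + a2' = y + b2'"
    for x a2' y b2'
    using rdp1_decomposable_le_unit[OF that(4,6,5,1,2,3) that(7)[symmetric]]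
    by (rule rdp1_decomposable_swap)
  have bounded_down: "b' \<le> u" if "b \<le> u" "0 \<le> b'" "b' \<le> b" for b b'
    using that(3,1) by (rule order_trans)
  show "rdp1_decomposable b1 b2 a1 a2"
    using rdp1_decomposable_le_kmul[where Q = "\<lambda>b. b \<le> u", OF u bounded_down base
        assms(4,5,6,1,3,2) assms(7)[symmetric]] .
qed

lemma rdp1_decomposable_of_strong_unit:
  assumes "strong_unit u" "0 \<le> (a1::'a)" "0 \<le> a2" "0 \<le> b1" "0 \<le> b2" "a1 + a2 = b1 + b2"
  shows "rdp1_decomposable a1 a2 b1 b2"
proof -
  have u: "0 \<le> u"
    using assms(1) unfolding strong_unit_def by blast
  obtain n where n: "a1 \<le> kmul n u"
    using assms(1) unfolding strong_unit_def by blast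
  have b1: "\<exists>m. b1 \<le> kmul m u"
    using assms(1) unfolding strong_unit_def by blast
  have bounded_down: "\<exists>m. b' \<le> kmul m u"
    if "\<exists>m. b \<le> kmul m u" "0 \<le> b'" "b' \<le> b" for b b'
    using that(1,3) by (meson order_trans)
  have base: "rdp1_decomposable x a2' y b2'"
    if "0 \<le> x" "x \<le> u" "0 \<le> a2'" "0 \<le> y" "0 \<le> b2'" "\<exists>m. y \<le> kmul m u"
      "x + a2' = y + b2'" for x a2' y b2'
    using that(6) rdp1_decomposable_left_le_unit[OF that(1-4) _ that(5,7)] by blast
  show ?thesis
    using rdp1_decomposable_le_kmul[where Q = "\<lambda>b. \<exists>m. b \<le> kmul m u", OF u bounded_down base
        assms(2) n assms(3-5) b1 assms(6)] .
qed

end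

end

end

theorem theorem3p6:
  fixes u :: "'a::{group_add,order}"
  assumes "po_group TYPE('a)"
    and "strong_unit u"
    and "RIP TYPE('a)"
    and "RDP1_Gamma u"
  shows "RDP1_group TYPE('a)"
  unfolding RDP1_group_iff_decomposable
  using rdp1_decomposable_of_strong_unit[OF assms(1,3,4,2)] by blast

end
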